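(* Let $X$ be a metric space and $A\subset X$. The following are equivalent: (1) the characteristic function $\chi_A$ of $A$ is glacially oscillating; (2) $A$ is coarsely clopen; (3) there is a glacial scale $\mathcal S$ such that every $\mathcal S$-chain starting at a point of $A$ is entirely contained in $A$.
   Context: A function $g:X\to\mathbb R$ is slowly oscillating if for all $r,\epsilon>0$ there is a bounded $K\subset X$ such that $x,y\in X\setminus K$ and $d(x,y)<r$ imply $|g(x)-g(y)|<\epsilon$. A subset $A$ of a metric space $X$ is coarsely clopen if $\chi_A$ is slowly oscillating (i.e. $A$ and $X\setminus A$ are coarsely disjoint). A glacial scale on $X$ is a sequence $\mathcal S=\{(K_i,n_i)\}_{i\ge1}$ of pairs, each $K_i$ a bounded subset of $X$ and $n_i$ a natural number, such that for every bounded $K\subset X$ and every $r>0$ there is $i$ with $K\subset K_i$ and $n_i>r$. An $\mathcal S$-chain is a finite sequence $x_1,\dots,x_n$ in $X$ such that for each $i\le n-1$ there is $m\ge1$ with $x_i,x_{i+1}\notin K_m$ and $d(x_i,x_{i+1})\le n_m$. A function $f:X\to\mathbb R$ is glacially oscillating if for every $\epsilon>0$ there is a glacial scale $\mathcal S$ such that $|f(x_1)-f(x_n)|<\epsilon$ for every $\mathcal S$-chain $x_1,\dots,x_n$. *)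

theory Defs
  imports "HOL-Analysis.Analysis"
begin

definition slowly_oscillating :: "('a::metric_space \<Rightarrow> real) \<Rightarrow> bool" where
  "slowly_oscillating g \<longleftrightarrow>
     (\<forall>r>0. \<forall>\<epsilon>>0. \<exists>K. bounded K \<and>
        (\<forall>x y. x \<notin> K \<longrightarrow> y \<notin> K \<longrightarrow> dist x y < r \<longrightarrow> \<bar>g x - g y\<bar> < \<epsilon>))"

definition coarsely_clopen :: "'a::metric_space set \<Rightarrow> bool" where
  "coarsely_clopen A \<longleftrightarrow> slowly_oscillating (indicator A :: 'a \<Rightarrow> real)"

text \<open>A glacial scale: a sequence of pairs (K_i, n_i), indexed by nat (starting at 0
  instead of 1, which is immaterial).\<close>
definition glacial_scale :: "(nat \<Rightarrow> 'a::metric_space set \<times> nat) \<Rightarrow> bool" where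
  "glacial_scale S \<longleftrightarrow>
     (\<forall>i. bounded (fst (S i))) \<and>
     (\<forall>K. bounded K \<longrightarrow> (\<forall>r>0::real. \<exists>i. K \<subseteq> fst (S i) \<and> real (snd (S i)) > r))"

definition S_chain :: "(nat \<Rightarrow> 'a::metric_space set \<times> nat) \<Rightarrow> 'a list \<Rightarrow> bool" where
  "S_chain S xs \<longleftrightarrow> xs \<noteq> [] \<and>
     (\<forall>i. Suc i < length xs \<longrightarrow>
        (\<exists>m. xs ! i \<notin> fst (S m) \<and> xs ! Suc i \<notin> fst (S m) \<and>
             dist (xs ! i) (xs ! Suc i) \<le> real (snd (S m))))"

definition glacially_oscillating :: "('a::metric_space \<Rightarrow> real) \<Rightarrow> bool" where
  "glacially_oscillating f \<longleftrightarrow>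
     (\<forall>\<epsilon>>0. \<exists>S. glacial_scale S \<and>
        (\<forall>xs. S_chain S xs \<longrightarrow> \<bar>f (hd xs) - f (last xs)\<bar> < \<epsilon>))"

end

theory Submission
  imports Defs
begin

text \<open>All three conditions are equivalent to the existence of a glacial scale whose single
  steps never leave A. From coarse clopenness such a scale is built by taking for K_n a bounded
  set outside of which A is not crossed by jumps of length below n + 1, enlarged by a ball of
  radius n so that the K_n exhaust X. A step-invariant scale makes every chain stay inside or
  outside A, which gives (1) and (3); conversely two-point chains are single steps, and a
  glacially oscillating function is slowly oscillating.\<close>

definition S_step :: "(nat \<Rightarrow> 'a::metric_space set \<times> nat) \<Rightarrow> 'a \<Rightarrow> 'a \<Rightarrow> bool" where
  "S_step S x y \<longleftrightarrow> (\<exists>m. x \<notin> fst (S m) \<and> y \<notin> fst (S m) \<and> dist x y \<le> real (snd (S m)))"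

lemma S_step_commute: "S_step S x y \<longleftrightarrow> S_step S y x"
  by (auto simp: S_step_def dist_commute)

lemma S_chain_iff_steps:
  "S_chain S xs \<longleftrightarrow> xs \<noteq> [] \<and> (\<forall>i. Suc i < length xs \<longrightarrow> S_step S (xs ! i) (xs ! Suc i))"
  by (simp add: S_chain_def S_step_def)

lemma S_chain_pair: "S_step S x y \<Longrightarrow> S_chain S [x, y]"
  by (auto simp: S_chain_iff_steps less_Suc_eq)

lemma S_chain_invariant:
  assumes step: "\<And>x y. S_step S x y \<Longrightarrow> P x \<Longrightarrow> P y"
    and chain: "S_chain S xs" and start: "P (hd xs)"
  shows "\<forall>x\<in>set xs. P x"
proof -
  have ne: "xs \<noteq> []" and steps: "\<And>i. Suc i < length xs \<Longrightarrow> S_step S (xs ! i) (xs ! Suc i)"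
    using chain by (auto simp: S_chain_iff_steps)
  have "P (xs ! j)" if "j < length xs" for j
    using that
  proof (induction j)
    case 0
    then show ?case using start ne by (simp add: hd_conv_nth)
  next
    case (Suc j)
    then have "P (xs ! j)" by simp
    then show ?case by (rule step[OF steps[OF Suc.prems]])
  qed
  then show ?thesis by (auto simp: in_set_conv_nth)
qed

lemma glacial_scale_large_step:
  assumes "glacial_scale S"
  obtains i where "real (snd (S i)) > r"
proof -
  have "\<forall>r>0. \<exists>i. {} \<subseteq> fst (S i) \<and> real (snd (S i)) > r"
    using assms bounded_empty unfolding glacial_scale_def by blast
  then obtain i where "real (snd (S i)) > max r 1"
    by (meson max.strict_coboundedI2 zero_less_one)
  then have "real (snd (S i)) > r" by simp
  then show ?thesis by (rule that)
qed

lemma glacial_scale_cball_Un: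
  assumes "\<And>n. bounded (K n)"
  shows "glacial_scale (\<lambda>n. (cball c (real n) \<union> K n, n))"
  unfolding glacial_scale_def
proof (intro conjI allI impI)
  fix L :: "'a set" and r :: real
  assume "bounded L"
  then obtain R where R: "\<forall>y\<in>L. dist c y \<le> R" using bounded_any_center by blast
  obtain n :: nat where n: "max R r < real n" using reals_Archimedean2 by blast
  have "L \<subseteq> cball c (real n)" using R n by fastforce
  then show "\<exists>n. L \<subseteq> fst (cball c (real n) \<union> K n, n) \<and> real (snd (cball c (real n) \<union> K n, n)) > r"
    using n by auto
qed (use assms in auto)

lemma glacially_oscillating_imp_slowly_oscillating:
  assumes "glacially_oscillating f"
  shows "slowly_oscillating f"
  unfolding slowly_oscillating_def
proof (intro allI impI)
  fix r \<epsilon> :: real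
  assume "r > 0" "\<epsilon> > 0"
  then obtain S where S: "glacial_scale S" "\<And>xs. S_chain S xs \<Longrightarrow> \<bar>f (hd xs) - f (last xs)\<bar> < \<epsilon>"
    using assms unfolding glacially_oscillating_def by blast
  obtain i where i: "real (snd (S i)) > r" using glacial_scale_large_step[OF S(1)] .
  have "\<bar>f x - f y\<bar> < \<epsilon>" if "x \<notin> fst (S i)" "y \<notin> fst (S i)" "dist x y < r" for x y
  proof -
    have "S_step S x y" unfolding S_step_def using that i by force
    then show ?thesis using S(2)[OF S_chain_pair] by simp
  qed
  moreover have "bounded (fst (S i))" using S(1) by (simp add: glacial_scale_def)
  ultimately show "\<exists>K. bounded K \<and> (\<forall>x y. x \<notin> K \<longrightarrow> y \<notin> K \<longrightarrow> dist x y < r \<longrightarrow> \<bar>f x - f y\<bar> < \<epsilon>)"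
    by blast
qed

lemma slowly_oscillating_imp_small_steps:
  assumes "slowly_oscillating g" "\<epsilon> > 0"
  shows "\<exists>S. glacial_scale S \<and> (\<forall>x y. S_step S x y \<longrightarrow> \<bar>g x - g y\<bar> < \<epsilon>)"
proof -
  have "\<forall>n::nat. \<exists>K. bounded K \<and>
      (\<forall>x y. x \<notin> K \<longrightarrow> y \<notin> K \<longrightarrow> dist x y < real n + 1 \<longrightarrow> \<bar>g x - g y\<bar> < \<epsilon>)"
    using assms unfolding slowly_oscillating_def by simp
  then obtain K where K: "\<And>n. bounded (K n)"
    "\<And>n x y. x \<notin> K n \<Longrightarrow> y \<notin> K n \<Longrightarrow> dist x y < real n + 1 \<Longrightarrow> \<bar>g x - g y\<bar> < \<epsilon>"
    by metis
  define S where "S n = (cball undefined (real n) \<union> K n, n)" for n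
  have "glacial_scale S" unfolding S_def using glacial_scale_cball_Un[OF K(1)] .
  moreover have "\<bar>g x - g y\<bar> < \<epsilon>" if "S_step S x y" for x y
    using that K(2) by (force simp: S_step_def S_def)
  ultimately show ?thesis by blast
qed

lemma abs_indicator_diff:
  "\<bar>indicator A x - indicator A y :: real\<bar> = (if x \<in> A \<longleftrightarrow> y \<in> A then 0 else 1)"
  by (simp add: indicator_def)

lemma coarsely_clopen_imp_step_invariant:
  assumes "coarsely_clopen A"
  shows "\<exists>S. glacial_scale S \<and> (\<forall>x y. S_step S x y \<longrightarrow> x \<in> A \<longrightarrow> y \<in> A)"
  using slowly_oscillating_imp_small_steps[of "indicator A" 1] assms
  by (auto simp: coarsely_clopen_def abs_indicator_diff split: if_splits)

lemma step_invariant_imp_glacially_oscillating: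
  assumes S: "glacial_scale S" and inv: "\<And>x y. S_step S x y \<Longrightarrow> x \<in> A \<Longrightarrow> y \<in> A"
  shows "glacially_oscillating (indicator A :: 'a::metric_space \<Rightarrow> real)"
  unfolding glacially_oscillating_def
proof (intro allI impI exI conjI)
  fix \<epsilon> :: real and xs
  assume "\<epsilon> > 0" and chain: "S_chain S xs"
  have "\<forall>x\<in>set xs. x \<in> A \<longleftrightarrow> hd xs \<in> A"
    using S_chain_invariant[OF _ chain, of "\<lambda>x. x \<in> A \<longleftrightarrow> hd xs \<in> A"] inv S_step_commute
    by blast
  moreover have "last xs \<in> set xs" using chain by (simp add: S_chain_def)
  ultimately show "\<bar>indicator A (hd xs) - indicator A (last xs)\<bar> < \<epsilon>"
    using \<open>\<epsilon> > 0\<close> by (simp add: abs_indicator_diff)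
qed (use S in simp)

theorem proposition3p11:
  fixes A :: "'a::metric_space set"
  shows "(glacially_oscillating (indicator A :: 'a \<Rightarrow> real) \<longleftrightarrow> coarsely_clopen A)
       \<and> (coarsely_clopen A \<longleftrightarrow>
           (\<exists>S. glacial_scale S \<and> (\<forall>xs. S_chain S xs \<longrightarrow> hd xs \<in> A \<longrightarrow> set xs \<subseteq> A)))"
proof -
  let ?inv = "\<lambda>S. glacial_scale S \<and> (\<forall>x y. S_step S x y \<longrightarrow> x \<in> A \<longrightarrow> y \<in> A)"
  have glacial_cc: "glacially_oscillating (indicator A :: 'a \<Rightarrow> real) \<Longrightarrow> coarsely_clopen A"
    by (simp add: coarsely_clopen_def glacially_oscillating_imp_slowly_oscillating)
  have inv_glacial: "?inv S \<Longrightarrow> glacially_oscillating (indicator A :: 'a \<Rightarrow> real)" for S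
    using step_invariant_imp_glacially_oscillating by blast
  have inv_chains: "?inv S \<Longrightarrow> S_chain S xs \<Longrightarrow> hd xs \<in> A \<Longrightarrow> set xs \<subseteq> A" for S xs
    using S_chain_invariant[of S "\<lambda>x. x \<in> A"] by blast
  have chains_inv: "(\<forall>xs. S_chain S xs \<longrightarrow> hd xs \<in> A \<longrightarrow> set xs \<subseteq> A) \<Longrightarrow>
      \<forall>x y. S_step S x y \<longrightarrow> x \<in> A \<longrightarrow> y \<in> A" for S
    using S_chain_pair by fastforce
  show ?thesis
  proof (intro conjI iffI)
    assume "coarsely_clopen A"
    then obtain S where "?inv S" using coarsely_clopen_imp_step_invariant by blast
    then show "glacially_oscillating (indicator A :: 'a \<Rightarrow> real)"
      and "\<exists>S. glacial_scale S \<and> (\<forall>xs. S_chain S xs \<longrightarrow> hd xs \<in> A \<longrightarrow> set xs \<subseteq> A)"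
      using inv_glacial inv_chains by blast+
  next
    assume "\<exists>S. glacial_scale S \<and> (\<forall>xs. S_chain S xs \<longrightarrow> hd xs \<in> A \<longrightarrow> set xs \<subseteq> A)"
    then obtain S where "?inv S" using chains_inv by blast
    then show "coarsely_clopen A" using inv_glacial glacial_cc by blast
  qed (fact glacial_cc)
qed

end
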